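(* There is a universal constant $C_1>1$ such that the following holds. Fix any $\rho,\delta\in(0,1)$. For every sufficiently large $d\in\mathbb{N}$, all $h,N\in\mathbb{N}$, and every $(u_1,u_2)\in\mathrm{Bases}^{2d}_{\rho,\delta}$, $$\Pr\left[\|R_{h,N}u_1\|_\infty\le \tfrac{1}{\sqrt{\delta d}}\ \text{and}\ \|R_{h,N}u_2\|_\infty\le\tfrac{1}{\sqrt{\delta d}}\right]\le C_1^h\,(\rho^4\delta d)^{-h},$$ where $R_{h,N}$ is an $h\times N$ matrix with i.i.d. uniform $\pm1$ entries.
   Context: $\mathbb{S}^{N-1}$ is the Euclidean unit sphere in $\mathbb{R}^N$. For $d\le N$, $S^N_d:=\{u\in\mathbb{R}^N:\|u\|_2=1,\ \|u\|_0\le d\}$, where $\|u\|_0$ is the number of nonzero coordinates and $\mathrm{supp}(u)$ the set of nonzero coordinates. For $\rho,\delta>0$, $\mathrm{Comp}^d_{\rho,\delta}:=\{u\in S^N_d : \exists\,\overline{T}\subseteq\mathrm{supp}(u),\ |\overline{T}|\le\delta d,\ \|u_{\mathrm{supp}(u)\setminus\overline{T}}\|_2\le\rho\}$ (here $u_A$ is the restriction of $u$ to coordinates in $A$). $\mathrm{Bases}^{d'}_{\rho,\delta}$ is the set of pairs $(u_1,u_2)\in\mathbb{S}^{N-1}\times\mathbb{S}^{N-1}$ such that $u_1,u_2$ are orthonormal, $|\mathrm{supp}(u_1)\cup\mathrm{supp}(u_2)|\le d'$, and $\mathrm{span}\{u_1,u_2\}\cap\mathrm{Comp}^{d'}_{\rho,\delta}=\emptyset$.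 *)

theory Defs
  imports "HOL-Probability.Probability"
begin

text \<open>Vectors in R^N are represented as functions nat => real vanishing outside {0..<N}.\<close>

definition vec_on :: "nat \<Rightarrow> (nat \<Rightarrow> real) \<Rightarrow> bool" where
  "vec_on N u \<longleftrightarrow> (\<forall>j. N \<le> j \<longrightarrow> u j = 0)"

definition vsupp :: "(nat \<Rightarrow> real) \<Rightarrow> nat set" where
  "vsupp u = {j. u j \<noteq> 0}"

definition l2norm :: "nat \<Rightarrow> (nat \<Rightarrow> real) \<Rightarrow> real" where
  "l2norm N u = sqrt (\<Sum>j<N. (u j)\<^sup>2)"

definition unit_sphere :: "nat \<Rightarrow> (nat \<Rightarrow> real) set" where
  "unit_sphere N = {u. vec_on N u \<and> l2norm N u = 1}"

definition sparse_sphere :: "nat \<Rightarrow> nat \<Rightarrow> (nat \<Rightarrow> real) set" where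
  "sparse_sphere N d = {u \<in> unit_sphere N. card (vsupp u) \<le> d}"

definition Comp :: "nat \<Rightarrow> nat \<Rightarrow> real \<Rightarrow> real \<Rightarrow> (nat \<Rightarrow> real) set" where
  "Comp N d \<rho> \<delta> = {u \<in> sparse_sphere N d.
      \<exists>T. T \<subseteq> vsupp u \<and> real (card T) \<le> \<delta> * real d \<and>
          sqrt (\<Sum>j\<in>vsupp u - T. (u j)\<^sup>2) \<le> \<rho>}"

definition Bases :: "nat \<Rightarrow> nat \<Rightarrow> real \<Rightarrow> real \<Rightarrow> ((nat \<Rightarrow> real) \<times> (nat \<Rightarrow> real)) set" where
  "Bases N d' \<rho> \<delta> = {(u1, u2). u1 \<in> unit_sphere N \<and> u2 \<in> unit_sphere N \<and>
      (\<Sum>j<N. u1 j * u2 j) = 0 \<and>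
      card (vsupp u1 \<union> vsupp u2) \<le> d' \<and>
      (\<forall>a b. (\<lambda>j. a * u1 j + b * u2 j) \<notin> Comp N d' \<rho> \<delta>)}"

definition sign_matrices :: "nat \<Rightarrow> nat \<Rightarrow> (nat \<times> nat \<Rightarrow> real) set" where
  "sign_matrices h N = ({0..<h} \<times> {0..<N}) \<rightarrow>\<^sub>E {-1, 1}"

definition rademacher_matrix :: "nat \<Rightarrow> nat \<Rightarrow> (nat \<times> nat \<Rightarrow> real) pmf" where
  "rademacher_matrix h N = pmf_of_set (sign_matrices h N)"

definition mat_vec :: "nat \<Rightarrow> (nat \<times> nat \<Rightarrow> real) \<Rightarrow> (nat \<Rightarrow> real) \<Rightarrow> nat \<Rightarrow> real" where
  "mat_vec N R u i = (\<Sum>j<N. R (i, j) * u j)"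

definition sup_norm :: "nat \<Rightarrow> (nat \<Rightarrow> real) \<Rightarrow> real" where
  "sup_norm h v = Max (insert 0 ((\<lambda>i. \<bar>v i\<bar>) ` {0..<h}))"

end

theory Submission
  imports Defs
begin

text \<open>
  A Hal\'asz-type small-ball estimate. The rows of the matrix are independent, so it suffices to
  bound, for one uniform sign vector \<open>r\<close>, the probability that both \<open>\<langle>r, \<lambda>u\<^sub>1\<rangle>\<close> and
  \<open>\<langle>r, \<lambda>u\<^sub>2\<rangle>\<close> lie in \<open>[-1, 1]\<close>, where \<open>\<lambda> = \<surd>(\<delta>d)\<close>. The indicator of \<open>[-1, 1]\<close> is dominated by
  a multiple of the Fej\'er function \<open>(1 - cos x)/x\<^sup>2 = \<integral>\<^sub>0\<^sup>1 (1 - s) cos (s x) ds\<close>, which turns the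
  probability into an integral of the characteristic function
  \<open>\<Prod>\<^sub>j cos (s \<lambda> u\<^sub>1\<^sub>j + t \<lambda> u\<^sub>2\<^sub>j)\<close> over \<open>[0,1]\<^sup>2\<close>. Every unit vector in the span of \<open>u\<^sub>1, u\<^sub>2\<close>
  is incompressible, so it keeps mass \<open>\<rho>\<^sup>2\<close> on coordinates of size at most \<open>1/\<surd>(2\<delta>d)\<close>;
  there \<open>|cos x| \<le> exp (-x\<^sup>2/3)\<close> applies and the characteristic function decays like the
  Gaussian \<open>exp (-\<rho>\<^sup>2 \<delta> d (s\<^sup>2 + t\<^sup>2)/3)\<close>, whose integral is \<open>O(1/(\<rho>\<^sup>2 \<delta> d))\<close>.
\<close>

lemma cos_ge_one_minus_sq_half: "1 - x\<^sup>2 / 2 \<le> cos (x::real)"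
proof -
  obtain t where "cos x = (\<Sum>m<2. cos_coeff m * x ^ m) + cos (t + pi) / fact 2 * x\<^sup>2"
    using Maclaurin_cos_expansion[of x 2] by auto
  then have "cos x = 1 - cos t * x\<^sup>2 / 2"
    by (simp add: numeral_2_eq_2 cos_coeff_def)
  moreover have "cos t * x\<^sup>2 \<le> x\<^sup>2"
    using mult_right_mono[OF cos_le_one[of t] zero_le_power2[of x]] by simp
  ultimately show ?thesis by linarith
qed

lemma cos_le_one_minus_sq_third:
  assumes "\<bar>x\<bar> \<le> 1"
  shows "cos (x::real) \<le> 1 - x\<^sup>2 / 3"
proof -
  obtain t where "cos x = (\<Sum>m<4. cos_coeff m * x ^ m) + cos (t + 2 * pi) / fact 4 * x ^ 4"
    using Maclaurin_cos_expansion[of x 4] by auto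
  then have "cos x = 1 - x\<^sup>2 / 2 + cos t * x ^ 4 / 24"
    by (simp add: cos_coeff_def lessThan_nat_numeral fact_numeral power2_eq_square)
  moreover have "cos t * x ^ 4 \<le> x\<^sup>2"
  proof -
    have "x\<^sup>2 \<le> 1"
      using assms abs_le_square_iff[of x 1] by simp
    then have "x\<^sup>2 * x\<^sup>2 \<le> 1 * x\<^sup>2"
      by (intro mult_right_mono) auto
    then have "x ^ 4 \<le> x\<^sup>2"
      by (simp flip: power_add)
    then show ?thesis
      using mult_right_mono[OF cos_le_one[of t], of "x ^ 4"] by simp
  qed
  ultimately show ?thesis
    using zero_le_power2[of x] by linarith
qed

lemma abs_cos_le_exp_neg_sq:
  assumes "\<bar>x\<bar> \<le> 1"
  shows "\<bar>cos (x::real)\<bar> \<le> exp (- x\<^sup>2 / 3)"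
proof -
  have "x\<^sup>2 \<le> 1"
    using assms abs_le_square_iff[of x 1] by simp
  then have "0 \<le> cos x"
    using cos_ge_one_minus_sq_half[of x] by linarith
  moreover have "1 + (- x\<^sup>2 / 3) \<le> exp (- x\<^sup>2 / 3)"
    by (rule exp_ge_add_one_self)
  ultimately show ?thesis
    using cos_le_one_minus_sq_third[OF assms] by simp
qed

lemma integral_exp_neg_sq_le:
  assumes "A > 0"
  shows "integral {0..1} (\<lambda>t. exp (- A * t\<^sup>2)) \<le> pi / (2 * sqrt A)"
proof -
  define F where "F t = arctan (sqrt A * t) / sqrt A" for t
  have sqrt_A: "sqrt A > 0"
    using assms by simp
  have "((\<lambda>t. exp (- A * t\<^sup>2)) has_integral integral {0..1} (\<lambda>t. exp (- A * t\<^sup>2))) {0..1}"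
    by (intro integrable_integral integrable_continuous_interval continuous_intros)
  moreover have "((\<lambda>t. 1 / (1 + A * t\<^sup>2)) has_integral (F 1 - F 0)) {0..1}"
  proof (rule fundamental_theorem_of_calculus)
    fix t :: real
    have "(F has_real_derivative 1 / (1 + A * t\<^sup>2)) (at t within {0..1})"
      unfolding F_def using assms
      by (auto intro!: derivative_eq_intros simp: power_mult_distrib divide_inverse)
    then show "(F has_vector_derivative 1 / (1 + A * t\<^sup>2)) (at t within {0..1})"
      by (simp add: has_real_derivative_iff_has_vector_derivative)
  qed simp
  moreover have "exp (- A * t\<^sup>2) \<le> 1 / (1 + A * t\<^sup>2)" for t
  proof -
    have "1 + A * t\<^sup>2 \<le> exp (A * t\<^sup>2)"
      using exp_ge_add_one_self[of "A * t\<^sup>2"] by simp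
    moreover have "0 < 1 + A * t\<^sup>2"
      using assms by (simp add: add_pos_nonneg)
    ultimately show ?thesis
      by (simp add: exp_minus field_simps)
  qed
  ultimately have "integral {0..1} (\<lambda>t. exp (- A * t\<^sup>2)) \<le> F 1 - F 0"
    by (rule has_integral_le)
  also have "F 1 - F 0 \<le> pi / (2 * sqrt A)"
    using divide_right_mono[of "arctan (sqrt A)" "pi / 2" "sqrt A"] arctan_ubound[of "sqrt A"] sqrt_A
    by (simp add: F_def)
  finally show ?thesis .
qed

section \<open>The Fej\'er function\<close>

definition fejer :: "real \<Rightarrow> real" where
  "fejer x = integral {0..1} (\<lambda>s. (1 - s) * cos (s * x))"

lemma fejer_has_integral: "((\<lambda>s. (1 - s) * cos (s * x)) has_integral fejer x) {0..1}"
  unfolding fejer_def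
  by (intro integrable_integral integrable_continuous_interval continuous_intros)

lemma fejer_eq:
  assumes "x \<noteq> 0"
  shows "fejer x = (1 - cos x) / x\<^sup>2"
proof -
  define F where "F s = (1 - s) * sin (s * x) / x - cos (s * x) / x\<^sup>2" for s
  have "((\<lambda>s. (1 - s) * cos (s * x)) has_integral (F 1 - F 0)) {0..1}"
  proof (rule fundamental_theorem_of_calculus)
    fix s :: real
    have "(F has_real_derivative (1 - s) * cos (s * x)) (at s within {0..1})"
      unfolding F_def using assms
      by (auto intro!: derivative_eq_intros simp: field_simps power2_eq_square)
    then show "(F has_vector_derivative (1 - s) * cos (s * x)) (at s within {0..1})"
      by (simp add: has_real_derivative_iff_has_vector_derivative)
  qed simp
  moreover have "F 1 - F 0 = (1 - cos x) / x\<^sup>2"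
    by (simp add: F_def diff_divide_distrib)
  ultimately show ?thesis
    using fejer_has_integral has_integral_unique by metis
qed

lemma fejer_ge_quarter:
  assumes "\<bar>x\<bar> \<le> 1"
  shows "1 / 4 \<le> fejer x"
proof -
  define F where "F s = s / 2 - s\<^sup>2 / 4" for s :: real
  have "((\<lambda>s. (1 - s) / 2) has_integral (F 1 - F 0)) {0..1}"
  proof (rule fundamental_theorem_of_calculus)
    fix s :: real
    have "(F has_real_derivative (1 - s) / 2) (at s within {0..1})"
      unfolding F_def by (auto intro!: derivative_eq_intros simp: field_simps)
    then show "(F has_vector_derivative (1 - s) / 2) (at s within {0..1})"
      by (simp add: has_real_derivative_iff_has_vector_derivative)
  qed simp
  then have "F 1 - F 0 \<le> fejer x"
  proof (rule has_integral_le[OF _ fejer_has_integral])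
    fix s :: real
    assume s: "s \<in> {0..1}"
    then have "\<bar>s * x\<bar> \<le> 1"
      using assms by (auto simp: abs_mult intro: mult_le_one)
    then have "(s * x)\<^sup>2 \<le> 1"
      using abs_le_square_iff[of "s * x" 1] by simp
    then have "1 / 2 \<le> cos (s * x)"
      using cos_ge_one_minus_sq_half[of "s * x"] by linarith
    then show "(1 - s) / 2 \<le> (1 - s) * cos (s * x)"
      using s mult_left_mono[of "1/2" "cos (s * x)" "1 - s"] by simp
  qed
  then show ?thesis by (simp add: F_def)
qed

lemma fejer_nonneg: "0 \<le> fejer x"
  using fejer_ge_quarter[of x] fejer_eq[of x] by (cases "\<bar>x\<bar> \<le> 1") auto

lemma card_small_pair_le_sum_fejer:
  fixes X Y :: "'a \<Rightarrow> real"
  assumes "finite S"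
  shows "real (card {r \<in> S. \<bar>X r\<bar> \<le> 1 \<and> \<bar>Y r\<bar> \<le> 1}) \<le> 16 * (\<Sum>r\<in>S. fejer (X r) * fejer (Y r))"
proof -
  have "real (card {r \<in> S. \<bar>X r\<bar> \<le> 1 \<and> \<bar>Y r\<bar> \<le> 1})
      = (\<Sum>r\<in>S. if \<bar>X r\<bar> \<le> 1 \<and> \<bar>Y r\<bar> \<le> 1 then 1 else 0)"
    using assms by (simp flip: sum.inter_filter)
  also have "\<dots> \<le> (\<Sum>r\<in>S. 16 * (fejer (X r) * fejer (Y r)))"
  proof (rule sum_mono)
    fix r
    have "1 / 4 * (1 / 4) \<le> fejer (X r) * fejer (Y r)" if "\<bar>X r\<bar> \<le> 1" "\<bar>Y r\<bar> \<le> 1"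
      using that fejer_ge_quarter fejer_nonneg by (intro mult_mono) auto
    then show "(if \<bar>X r\<bar> \<le> 1 \<and> \<bar>Y r\<bar> \<le> 1 then 1 else 0) \<le> 16 * (fejer (X r) * fejer (Y r))"
      using fejer_nonneg[of "X r"] fejer_nonneg[of "Y r"] by auto
  qed
  finally show ?thesis
    by (simp add: sum_distrib_left)
qed

text \<open>Fubini for the Fej\'er integrals, with the integrand bounded pointwise.\<close>

lemma sum_fejer_mult_le:
  fixes X Y :: "'a \<Rightarrow> real"
  assumes S: "finite S" and g: "continuous_on {0..1} g"
    and bound: "\<And>s t. s \<in> {0..1} \<Longrightarrow> t \<in> {0..1} \<Longrightarrow>
                  \<bar>\<Sum>r\<in>S. cos (s * X r) * cos (t * Y r)\<bar> \<le> M * g s * g t"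
  shows "(\<Sum>r\<in>S. fejer (X r) * fejer (Y r)) \<le> M * (integral {0..1} g)\<^sup>2"
proof -
  define H where "H s = (\<Sum>r\<in>S. (1 - s) * cos (s * X r) * fejer (Y r))" for s
  have g_scaled: "continuous_on {0..1} (\<lambda>t. c * g t)" for c
    using g by (rule continuous_on_mult_left)
  have inner: "H s \<le> M * g s * integral {0..1} g" if s: "s \<in> {0..1}" for s
  proof -
    have "H s = (\<Sum>r\<in>S. integral {0..1} (\<lambda>t. (1 - s) * cos (s * X r) * ((1 - t) * cos (t * Y r))))"
      unfolding H_def fejer_def by simp
    also have "\<dots> = integral {0..1} (\<lambda>t. \<Sum>r\<in>S. (1 - s) * cos (s * X r) * ((1 - t) * cos (t * Y r)))"
      using S by (intro integral_sum[symmetric] integrable_continuous_interval continuous_intros)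
    also have "\<dots> \<le> integral {0..1} (\<lambda>t. M * g s * g t)"
    proof (rule integral_le)
      fix t :: real
      assume t: "t \<in> {0..1}"
      have "(\<Sum>r\<in>S. (1 - s) * cos (s * X r) * ((1 - t) * cos (t * Y r)))
          = (1 - s) * (1 - t) * (\<Sum>r\<in>S. cos (s * X r) * cos (t * Y r))"
        by (simp add: sum_distrib_left algebra_simps)
      also have "\<dots> \<le> (1 - s) * (1 - t) * \<bar>\<Sum>r\<in>S. cos (s * X r) * cos (t * Y r)\<bar>"
        using s t by (intro mult_left_mono) auto
      also have "\<dots> \<le> \<bar>\<Sum>r\<in>S. cos (s * X r) * cos (t * Y r)\<bar>"
        using s t by (intro mult_left_le_one_le) (auto intro: mult_le_one)
      also have "\<dots> \<le> M * g s * g t"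
        using bound s t by blast
      finally show "(\<Sum>r\<in>S. (1 - s) * cos (s * X r) * ((1 - t) * cos (t * Y r))) \<le> M * g s * g t" .
    qed (intro integrable_continuous_interval g_scaled continuous_intros)+
    also have "\<dots> = M * g s * integral {0..1} g"
      by simp
    finally show ?thesis .
  qed
  have "(\<Sum>r\<in>S. fejer (X r) * fejer (Y r)) = (\<Sum>r\<in>S. integral {0..1} (\<lambda>s. (1 - s) * cos (s * X r) * fejer (Y r)))"
    unfolding fejer_def[of "X _"] by simp
  also have "\<dots> = integral {0..1} H"
    unfolding H_def
    using S by (intro integral_sum[symmetric] integrable_continuous_interval continuous_intros)
  also have "\<dots> \<le> integral {0..1} (\<lambda>s. M * g s * integral {0..1} g)"
    using inner unfolding H_def
    by (intro integral_le integrable_continuous_interval continuous_on_mult_right g_scaled continuous_intros)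
  also have "\<dots> = M * (integral {0..1} g)\<^sup>2"
    by (simp add: power2_eq_square)
  finally show ?thesis .
qed

section \<open>Sums over sign vectors\<close>

definition sign_vectors :: "nat \<Rightarrow> (nat \<Rightarrow> real) set" where
  "sign_vectors N = PiE {..<N} (\<lambda>_. {-1, 1})"

lemma finite_sign_vectors: "finite (sign_vectors N)"
  unfolding sign_vectors_def by (intro finite_PiE) auto

lemma card_sign_vectors: "card (sign_vectors N) = 2 ^ N"
  unfolding sign_vectors_def by (simp add: card_PiE numeral_2_eq_2)

text \<open>The characteristic function of a Rademacher sum, via \<open>cos = Re \<circ> exp \<circ> (\<i> *)\<close>.\<close>

lemma sum_sign_vectors_cos:
  "(\<Sum>r\<in>sign_vectors N. cos (\<Sum>j<N. r j * c j)) = 2 ^ N * (\<Prod>j<N. cos (c j))"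
proof -
  define f where "f j y = exp (\<i> * complex_of_real (y * c j))" for j y
  have euler: "cos (\<Sum>j<N. r j * c j) = Re (\<Prod>j<N. f j (r j))" for r
  proof -
    have "(\<Prod>j<N. f j (r j)) = exp (\<i> * complex_of_real (\<Sum>j<N. r j * c j))"
      by (simp add: f_def exp_sum sum_distrib_left)
    then show ?thesis
      by (simp add: Re_exp)
  qed
  have pair: "(\<Sum>y\<in>{-1, 1}. f j y) = complex_of_real (2 * cos (c j))" for j
  proof -
    have "(\<Sum>y\<in>{-1, 1}. f j y) = exp (\<i> * complex_of_real (c j)) + exp (- (\<i> * complex_of_real (c j)))"
      by (simp add: f_def)
    also have "\<dots> = 2 * cos (complex_of_real (c j))"
      by (simp add: cos_exp_eq)
    also have "\<dots> = complex_of_real (2 * cos (c j))"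
      by (simp add: cos_of_real)
    finally show ?thesis .
  qed
  have "(\<Sum>r\<in>sign_vectors N. cos (\<Sum>j<N. r j * c j)) = Re (\<Sum>r\<in>sign_vectors N. \<Prod>j<N. f j (r j))"
    by (simp add: euler)
  also have "(\<Sum>r\<in>sign_vectors N. \<Prod>j<N. f j (r j)) = (\<Prod>j<N. \<Sum>y\<in>{-1, 1}. f j y)"
    unfolding sign_vectors_def by (rule prod_sum_PiE[symmetric]) auto
  also have "\<dots> = complex_of_real (2 ^ N * (\<Prod>j<N. cos (c j)))"
    by (simp add: pair prod.distrib)
  finally show ?thesis
    by (simp only: Re_complex_of_real)
qed

lemma sum_sign_vectors_cos_mult_cos:
  "(\<Sum>r\<in>sign_vectors N. cos (s * (\<Sum>j<N. r j * c1 j)) * cos (t * (\<Sum>j<N. r j * c2 j)))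
     = 2 ^ N * ((\<Prod>j<N. cos (s * c1 j + t * c2 j)) + (\<Prod>j<N. cos (s * c1 j - t * c2 j))) / 2"
proof -
  have product_to_sum: "cos (s * (\<Sum>j<N. r j * c1 j)) * cos (t * (\<Sum>j<N. r j * c2 j))
      = cos (\<Sum>j<N. r j * (s * c1 j + t * c2 j)) / 2 + cos (\<Sum>j<N. r j * (s * c1 j - t * c2 j)) / 2" for r
  proof -
    have plus: "(\<Sum>j<N. r j * (s * c1 j + t * c2 j)) = s * (\<Sum>j<N. r j * c1 j) + t * (\<Sum>j<N. r j * c2 j)"
      and minus: "(\<Sum>j<N. r j * (s * c1 j - t * c2 j)) = s * (\<Sum>j<N. r j * c1 j) - t * (\<Sum>j<N. r j * c2 j)"
      by (simp_all add: sum_distrib_left sum.distrib sum_subtractf algebra_simps)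
    show ?thesis
      unfolding plus minus cos_add cos_diff by (simp add: field_simps)
  qed
  show ?thesis
    unfolding product_to_sum sum.distrib sum_divide_distrib[symmetric] sum_sign_vectors_cos
    by (simp add: add_divide_distrib distrib_left)
qed

lemma card_sign_vectors_small_pair_le:
  fixes c1 c2 :: "nat \<Rightarrow> real"
  assumes A: "A > 0"
    and decay: "\<And>s t. \<bar>s\<bar> \<le> 1 \<Longrightarrow> \<bar>t\<bar> \<le> 1 \<Longrightarrow>
                  \<bar>\<Prod>j<N. cos (s * c1 j + t * c2 j)\<bar> \<le> exp (- A * s\<^sup>2) * exp (- A * t\<^sup>2)"
  shows "real (card {r \<in> sign_vectors N. \<bar>\<Sum>j<N. r j * c1 j\<bar> \<le> 1 \<and> \<bar>\<Sum>j<N. r j * c2 j\<bar> \<le> 1})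
           \<le> 4 * pi\<^sup>2 / A * 2 ^ N"
proof -
  define g where "g t = exp (- A * t\<^sup>2)" for t
  have g_cont: "continuous_on {0..1} g"
    unfolding g_def by (intro continuous_intros)
  have sum_bound: "\<bar>\<Sum>r\<in>sign_vectors N. cos (s * (\<Sum>j<N. r j * c1 j)) * cos (t * (\<Sum>j<N. r j * c2 j))\<bar>
                     \<le> 2 ^ N * g s * g t" if "s \<in> {0..1}" "t \<in> {0..1}" for s t
  proof -
    have "\<bar>\<Prod>j<N. cos (s * c1 j + t * c2 j)\<bar> \<le> g s * g t"
      using that decay[of s t] by (simp add: g_def)
    moreover have "\<bar>\<Prod>j<N. cos (s * c1 j - t * c2 j)\<bar> \<le> g s * g t"
      using that decay[of s "- t"] by (simp add: g_def)
    ultimately have "\<bar>(\<Prod>j<N. cos (s * c1 j + t * c2 j)) + (\<Prod>j<N. cos (s * c1 j - t * c2 j))\<bar>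
                       \<le> 2 * (g s * g t)"
      by linarith
    then show ?thesis
      unfolding sum_sign_vectors_cos_mult_cos by (simp add: abs_mult)
  qed
  have "0 \<le> integral {0..1} g"
    unfolding g_def by (intro integral_nonneg integrable_continuous_interval continuous_intros) auto
  then have "(integral {0..1} g)\<^sup>2 \<le> (pi / (2 * sqrt A))\<^sup>2"
    using integral_exp_neg_sq_le[OF A] unfolding g_def by (intro power_mono)
  also have "\<dots> = pi\<^sup>2 / (4 * A)"
    using A by (simp add: power_divide power_mult_distrib)
  finally have integral_sq: "(integral {0..1} g)\<^sup>2 \<le> pi\<^sup>2 / (4 * A)" .
  have "real (card {r \<in> sign_vectors N. \<bar>\<Sum>j<N. r j * c1 j\<bar> \<le> 1 \<and> \<bar>\<Sum>j<N. r j * c2 j\<bar> \<le> 1})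
          \<le> 16 * (\<Sum>r\<in>sign_vectors N. fejer (\<Sum>j<N. r j * c1 j) * fejer (\<Sum>j<N. r j * c2 j))"
    by (rule card_small_pair_le_sum_fejer[OF finite_sign_vectors])
  also have "\<dots> \<le> 16 * (2 ^ N * (integral {0..1} g)\<^sup>2)"
    using sum_fejer_mult_le[OF finite_sign_vectors g_cont sum_bound] by simp
  also have "\<dots> \<le> 16 * (2 ^ N * (pi\<^sup>2 / (4 * A)))"
    using integral_sq by (intro mult_left_mono) auto
  also have "\<dots> = 4 * pi\<^sup>2 / A * 2 ^ N"
    by simp
  finally show ?thesis .
qed

section \<open>Incompressible vectors\<close>

lemma vsupp_subset_lessThan: "vec_on N u \<Longrightarrow> vsupp u \<subseteq> {..<N}"
  unfolding vec_on_def vsupp_def by (auto simp: not_less[symmetric])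

lemma sum_sq_unit_sphere: "u \<in> unit_sphere N \<Longrightarrow> (\<Sum>j<N. (u j)\<^sup>2) = 1"
  unfolding unit_sphere_def l2norm_def by auto

text \<open>Removing the at most \<open>\<delta>d\<close> coordinates with \<open>w\<^sub>j\<^sup>2 > 1/(\<delta>d)\<close> leaves more than \<open>\<rho>\<^sup>2\<close> of the mass.\<close>

lemma not_Comp_mass_on_small_coords:
  assumes w: "w \<in> sparse_sphere N d - Comp N d \<rho> \<delta>" and "0 \<le> \<rho>" and D: "0 < \<delta> * d"
  shows "\<rho>\<^sup>2 < (\<Sum>j \<in> {j \<in> vsupp w. (w j)\<^sup>2 \<le> 1 / (\<delta> * d)}. (w j)\<^sup>2)"
proof -
  define T where "T = {j \<in> vsupp w. 1 / (\<delta> * d) < (w j)\<^sup>2}"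
  have T_sub: "T \<subseteq> {..<N}"
    using w vsupp_subset_lessThan by (auto simp: T_def sparse_sphere_def unit_sphere_def)
  have "real (card T) * (1 / (\<delta> * d)) = (\<Sum>j\<in>T. 1 / (\<delta> * d))"
    by simp
  also have "\<dots> \<le> (\<Sum>j\<in>T. (w j)\<^sup>2)"
    by (rule sum_mono) (auto simp: T_def)
  also have "\<dots> \<le> (\<Sum>j<N. (w j)\<^sup>2)"
    using T_sub by (intro sum_mono2) auto
  also have "\<dots> = 1"
    using w by (simp add: sparse_sphere_def sum_sq_unit_sphere)
  finally have "real (card T) \<le> \<delta> * d"
    using D by (simp add: field_simps)
  moreover have "T \<subseteq> vsupp w"
    by (auto simp: T_def)
  ultimately have "\<not> sqrt (\<Sum>j\<in>vsupp w - T. (w j)\<^sup>2) \<le> \<rho>"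
    using w unfolding Comp_def by blast
  moreover have "vsupp w - T = {j \<in> vsupp w. (w j)\<^sup>2 \<le> 1 / (\<delta> * d)}"
    by (auto simp: T_def)
  ultimately have "\<not> sqrt (\<Sum>j \<in> {j \<in> vsupp w. (w j)\<^sup>2 \<le> 1 / (\<delta> * d)}. (w j)\<^sup>2) \<le> sqrt (\<rho>\<^sup>2)"
    using \<open>0 \<le> \<rho>\<close> by simp
  then show ?thesis
    by (simp only: real_sqrt_le_iff not_le)
qed

lemma prod_cos_not_Comp_le:
  assumes w: "w \<in> sparse_sphere N d - Comp N d \<rho> \<delta>" and "0 \<le> \<rho>" and D: "0 < \<delta> * d"
    and L: "L\<^sup>2 \<le> \<delta> * d"
  shows "\<bar>\<Prod>j<N. cos (L * w j)\<bar> \<le> exp (- \<rho>\<^sup>2 * L\<^sup>2 / 3)"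
proof -
  define U where "U = {j \<in> vsupp w. (w j)\<^sup>2 \<le> 1 / (\<delta> * d)}"
  have U_sub: "U \<subseteq> {..<N}"
    using w vsupp_subset_lessThan by (auto simp: U_def sparse_sphere_def unit_sphere_def)
  have small: "\<bar>L * w j\<bar> \<le> 1" if "j \<in> U" for j
  proof -
    have "L\<^sup>2 * (w j)\<^sup>2 \<le> (\<delta> * d) * (1 / (\<delta> * d))"
      using that L D by (intro mult_mono) (auto simp: U_def)
    then have "(L * w j)\<^sup>2 \<le> 1"
      using D by (simp add: power_mult_distrib split: if_split_asm)
    then show ?thesis
      using abs_le_square_iff[of "L * w j" 1] by simp
  qed
  have "\<bar>\<Prod>j<N. cos (L * w j)\<bar> = (\<Prod>j\<in>U. \<bar>cos (L * w j)\<bar>) * (\<Prod>j\<in>{..<N} - U. \<bar>cos (L * w j)\<bar>)"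
    using prod.subset_diff[OF U_sub] by (simp add: abs_prod mult.commute)
  also have "\<dots> \<le> (\<Prod>j\<in>U. exp (- (L * w j)\<^sup>2 / 3)) * 1"
    using small abs_cos_le_exp_neg_sq
    by (intro mult_mono prod_mono prod_le_1 prod_nonneg) auto
  also have "\<dots> = exp (\<Sum>j\<in>U. - (L * w j)\<^sup>2 / 3)"
    using finite_subset[OF U_sub] by (simp add: exp_sum)
  also have "\<dots> = exp (- L\<^sup>2 * (\<Sum>j\<in>U. (w j)\<^sup>2) / 3)"
    by (simp add: power_mult_distrib sum_distrib_left sum_divide_distrib sum_negf)
  also have "\<dots> \<le> exp (- \<rho>\<^sup>2 * L\<^sup>2 / 3)"
  proof -
    have "\<rho>\<^sup>2 * L\<^sup>2 \<le> (\<Sum>j\<in>U. (w j)\<^sup>2) * L\<^sup>2"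
      using not_Comp_mass_on_small_coords[OF assms(1-3)] unfolding U_def[symmetric]
      by (intro mult_right_mono) auto
    then show ?thesis
      by (simp add: mult.commute)
  qed
  finally show ?thesis .
qed

lemma Bases_unit_combination_not_Comp:
  assumes B: "(u1, u2) \<in> Bases N d \<rho> \<delta>" and ab: "a\<^sup>2 + b\<^sup>2 = 1"
  shows "(\<lambda>j. a * u1 j + b * u2 j) \<in> sparse_sphere N d - Comp N d \<rho> \<delta>"
proof -
  define w where "w j = a * u1 j + b * u2 j" for j
  have u1: "u1 \<in> unit_sphere N" and u2: "u2 \<in> unit_sphere N"
    and orth: "(\<Sum>j<N. u1 j * u2 j) = 0" and card: "card (vsupp u1 \<union> vsupp u2) \<le> d"
    using B by (auto simp: Bases_def)
  have on: "vec_on N u1" "vec_on N u2"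
    using u1 u2 by (auto simp: unit_sphere_def)
  have "(\<Sum>j<N. (w j)\<^sup>2)
      = a\<^sup>2 * (\<Sum>j<N. (u1 j)\<^sup>2) + 2 * a * b * (\<Sum>j<N. u1 j * u2 j) + b\<^sup>2 * (\<Sum>j<N. (u2 j)\<^sup>2)"
    by (simp add: w_def sum_distrib_left power2_eq_square algebra_simps sum.distrib)
  then have "l2norm N w = 1"
    using ab orth sum_sq_unit_sphere[OF u1] sum_sq_unit_sphere[OF u2] by (simp add: l2norm_def)
  moreover have "vec_on N w"
    using on by (simp add: vec_on_def w_def)
  moreover have "card (vsupp w) \<le> d"
  proof -
    have "finite (vsupp u1 \<union> vsupp u2)"
      using on vsupp_subset_lessThan finite_subset by blast
    moreover have "vsupp w \<subseteq> vsupp u1 \<union> vsupp u2"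
      by (auto simp: vsupp_def w_def)
    ultimately show ?thesis
      using card card_mono order_trans by blast
  qed
  moreover have "w \<notin> Comp N d \<rho> \<delta>"
    using B by (simp add: Bases_def w_def[abs_def])
  ultimately show ?thesis
    by (simp add: sparse_sphere_def unit_sphere_def w_def[abs_def])
qed

text \<open>Polar coordinates: \<open>\<alpha> u\<^sub>1 + \<beta> u\<^sub>2 = L (a u\<^sub>1 + b u\<^sub>2)\<close> with \<open>L = \<surd>(\<alpha>\<^sup>2 + \<beta>\<^sup>2)\<close> and \<open>a\<^sup>2 + b\<^sup>2 = 1\<close>.\<close>

lemma prod_cos_Bases_le:
  assumes B: "(u1, u2) \<in> Bases N d \<rho> \<delta>" and "0 \<le> \<rho>" and D: "0 < \<delta> * d"
    and small: "\<alpha>\<^sup>2 + \<beta>\<^sup>2 \<le> \<delta> * d"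
  shows "\<bar>\<Prod>j<N. cos (\<alpha> * u1 j + \<beta> * u2 j)\<bar> \<le> exp (- \<rho>\<^sup>2 * (\<alpha>\<^sup>2 + \<beta>\<^sup>2) / 3)"
proof (cases "\<alpha>\<^sup>2 + \<beta>\<^sup>2 = 0")
  case True
  then show ?thesis by simp
next
  case False
  define L where "L = sqrt (\<alpha>\<^sup>2 + \<beta>\<^sup>2)"
  have "0 < \<alpha>\<^sup>2 + \<beta>\<^sup>2"
    using False by (metis add_nonneg_nonneg zero_le_power2 less_eq_real_def)
  then have L: "L > 0" "L\<^sup>2 = \<alpha>\<^sup>2 + \<beta>\<^sup>2"
    by (auto simp: L_def)
  have "(\<alpha> / L)\<^sup>2 + (\<beta> / L)\<^sup>2 = 1"
    using L False by (simp add: power_divide add_divide_distrib[symmetric])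
  then have w: "(\<lambda>j. (\<alpha> / L) * u1 j + (\<beta> / L) * u2 j) \<in> sparse_sphere N d - Comp N d \<rho> \<delta>"
    by (rule Bases_unit_combination_not_Comp[OF B])
  have "\<bar>\<Prod>j<N. cos (L * ((\<alpha> / L) * u1 j + (\<beta> / L) * u2 j))\<bar> \<le> exp (- \<rho>\<^sup>2 * L\<^sup>2 / 3)"
    by (rule prod_cos_not_Comp_le[OF w \<open>0 \<le> \<rho>\<close> D]) (use L small in simp)
  moreover have "L * ((\<alpha> / L) * u1 j + (\<beta> / L) * u2 j) = \<alpha> * u1 j + \<beta> * u2 j" for j
    using L by (simp add: field_simps)
  ultimately show ?thesis
    using L by simp
qed

section \<open>Rademacher matrices\<close>

definition mat_row :: "nat \<Rightarrow> (nat \<times> nat \<Rightarrow> real) \<Rightarrow> nat \<Rightarrow> nat \<Rightarrow> real" where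
  "mat_row N R i = (\<lambda>j\<in>{..<N}. R (i, j))"

lemma mat_vec_eq_row: "mat_vec N R u i = (\<Sum>j<N. mat_row N R i j * u j)"
  unfolding mat_vec_def mat_row_def by simp

lemma sup_norm_le_iff: "0 \<le> c \<Longrightarrow> sup_norm h v \<le> c \<longleftrightarrow> (\<forall>i<h. \<bar>v i\<bar> \<le> c)"
  unfolding sup_norm_def by auto

lemma bij_betw_sign_matrices_rows:
  "bij_betw (\<lambda>R. \<lambda>i\<in>{..<h}. mat_row N R i) (sign_matrices h N) (PiE {..<h} (\<lambda>_. sign_vectors N))"
proof (rule bij_betw_byWitness[where f' = "\<lambda>F (i, j). if i < h \<and> j < N then F i j else undefined"])
  show "\<forall>R\<in>sign_matrices h N. (\<lambda>(i, j). if i < h \<and> j < N then (\<lambda>i\<in>{..<h}. mat_row N R i) i j else undefined) = R"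
    by (auto simp: sign_matrices_def mat_row_def PiE_def extensional_def fun_eq_iff)
  show "\<forall>F\<in>PiE {..<h} (\<lambda>_. sign_vectors N).
          (\<lambda>i\<in>{..<h}. mat_row N (\<lambda>(i, j). if i < h \<and> j < N then F i j else undefined) i) = F"
    by (auto simp: sign_vectors_def mat_row_def PiE_iff extensional_def fun_eq_iff)
  show "(\<lambda>R. \<lambda>i\<in>{..<h}. mat_row N R i) ` sign_matrices h N \<subseteq> PiE {..<h} (\<lambda>_. sign_vectors N)"
    unfolding sign_matrices_def sign_vectors_def mat_row_def by (force simp: PiE_iff)
  show "(\<lambda>F (i, j). if i < h \<and> j < N then F i j else undefined) ` PiE {..<h} (\<lambda>_. sign_vectors N)
          \<subseteq> sign_matrices h N"
  proof (rule image_subsetI)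
    fix F
    assume "F \<in> PiE {..<h} (\<lambda>_. sign_vectors N)"
    then have "F i j \<in> {-1, 1}" if "i < h" "j < N" for i j
      using that by (auto simp: sign_vectors_def)
    then show "(\<lambda>(i, j). if i < h \<and> j < N then F i j else undefined) \<in> sign_matrices h N"
      by (auto simp: sign_matrices_def PiE_iff extensional_def)
  qed
qed

lemma prob_rademacher_rows:
  "measure_pmf.prob (rademacher_matrix h N) {R. \<forall>i<h. Q (mat_row N R i)}
     = (real (card {r \<in> sign_vectors N. Q r}) / 2 ^ N) ^ h"
proof -
  have "bij_betw (\<lambda>R. \<lambda>i\<in>{..<h}. mat_row N R i) {R \<in> sign_matrices h N. \<forall>i<h. Q (mat_row N R i)}
          {F \<in> PiE {..<h} (\<lambda>_. sign_vectors N). \<forall>i<h. Q (F i)}"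
    by (rule bij_betw_Collect[OF bij_betw_sign_matrices_rows]) auto
  moreover have "{F \<in> PiE {..<h} (\<lambda>_. sign_vectors N). \<forall>i<h. Q (F i)}
                   = PiE {..<h} (\<lambda>_. {r \<in> sign_vectors N. Q r})"
    by (auto simp: PiE_def Pi_def)
  ultimately have "card (sign_matrices h N \<inter> {R. \<forall>i<h. Q (mat_row N R i)}) = card {r \<in> sign_vectors N. Q r} ^ h"
    by (simp add: bij_betw_same_card Int_def card_PiE)
  moreover have "card (sign_matrices h N) = (2 ^ N) ^ h"
    using bij_betw_same_card[OF bij_betw_sign_matrices_rows]
    by (simp add: card_PiE card_sign_vectors)
  moreover have "finite (sign_matrices h N)" "sign_matrices h N \<noteq> {}"
    by (auto simp: sign_matrices_def PiE_eq_empty_iff intro!: finite_PiE)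
  ultimately show ?thesis
    by (simp add: rademacher_matrix_def measure_pmf_of_set power_divide)
qed

lemma card_sign_vectors_Bases_small_le:
  assumes B: "(u1, u2) \<in> Bases N d \<rho> \<delta>" and \<rho>: "0 < \<rho>" and l: "0 < l" "2 * l\<^sup>2 \<le> \<delta> * d"
  shows "real (card {r \<in> sign_vectors N. \<bar>\<Sum>j<N. r j * (l * u1 j)\<bar> \<le> 1 \<and> \<bar>\<Sum>j<N. r j * (l * u2 j)\<bar> \<le> 1})
           \<le> 12 * pi\<^sup>2 / (\<rho>\<^sup>2 * l\<^sup>2) * 2 ^ N"
proof -
  define A where "A = \<rho>\<^sup>2 * l\<^sup>2 / 3"
  have A: "A > 0"
    using \<rho> l by (simp add: A_def)
  have D: "0 < \<delta> * d"
    using l zero_less_power2[of l] by linarith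
  have "\<bar>\<Prod>j<N. cos (s * (l * u1 j) + t * (l * u2 j))\<bar> \<le> exp (- A * s\<^sup>2) * exp (- A * t\<^sup>2)"
    if "\<bar>s\<bar> \<le> 1" "\<bar>t\<bar> \<le> 1" for s t
  proof -
    have "(s * l)\<^sup>2 + (t * l)\<^sup>2 = (s\<^sup>2 + t\<^sup>2) * l\<^sup>2"
      by (simp add: power_mult_distrib algebra_simps)
    also have "\<dots> \<le> 2 * l\<^sup>2"
      using that abs_le_square_iff[of s 1] abs_le_square_iff[of t 1] by (intro mult_right_mono) auto
    finally have "\<bar>\<Prod>j<N. cos ((s * l) * u1 j + (t * l) * u2 j)\<bar> \<le> exp (- \<rho>\<^sup>2 * ((s * l)\<^sup>2 + (t * l)\<^sup>2) / 3)"
      using \<rho> l D by (intro prod_cos_Bases_le[OF B]) auto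
    also have "\<dots> = exp (- A * s\<^sup>2) * exp (- A * t\<^sup>2)"
      by (simp add: A_def power_mult_distrib field_simps flip: exp_add)
    finally show ?thesis
      by (simp add: mult.assoc mult.left_commute)
  qed
  then have "real (card {r \<in> sign_vectors N. \<bar>\<Sum>j<N. r j * (l * u1 j)\<bar> \<le> 1 \<and> \<bar>\<Sum>j<N. r j * (l * u2 j)\<bar> \<le> 1})
               \<le> 4 * pi\<^sup>2 / A * 2 ^ N"
    by (rule card_sign_vectors_small_pair_le[OF A])
  then show ?thesis
    by (simp add: A_def)
qed

lemma prob_small_pair_le:
  fixes \<rho> \<delta> :: real
  assumes \<rho>: "0 < \<rho>" "\<rho> \<le> 1" and \<delta>: "0 < \<delta>" and d: "d \<ge> 1"
    and B: "(u1, u2) \<in> Bases N (2 * d) \<rho> \<delta>"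
  shows "measure_pmf.prob (rademacher_matrix h N)
            {R. sup_norm h (mat_vec N R u1) \<le> 1 / sqrt (\<delta> * real d) \<and>
                sup_norm h (mat_vec N R u2) \<le> 1 / sqrt (\<delta> * real d)}
          \<le> 200 ^ h * (\<rho> ^ 4 * \<delta> * real d) powr (- real h)"
proof -
  define D where "D = \<delta> * real d"
  define l where "l = sqrt D"
  have D: "D > 0" and l: "l > 0" "l\<^sup>2 = D"
    using \<delta> d by (auto simp: D_def l_def)
  define Q where "Q r \<longleftrightarrow> \<bar>\<Sum>j<N. r j * (l * u1 j)\<bar> \<le> 1 \<and> \<bar>\<Sum>j<N. r j * (l * u2 j)\<bar> \<le> 1" for r
  have row_small: "\<bar>mat_vec N R u i\<bar> \<le> 1 / l \<longleftrightarrow> \<bar>\<Sum>j<N. mat_row N R i j * (l * u j)\<bar> \<le> 1" for R u i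
  proof -
    have "(\<Sum>j<N. mat_row N R i j * (l * u j)) = l * mat_vec N R u i"
      by (simp add: mat_vec_eq_row sum_distrib_left mult.left_commute)
    then show ?thesis
      using l by (simp add: abs_mult field_simps)
  qed
  have event: "{R. sup_norm h (mat_vec N R u1) \<le> 1 / sqrt (\<delta> * real d) \<and>
                    sup_norm h (mat_vec N R u2) \<le> 1 / sqrt (\<delta> * real d)}
                 = {R. \<forall>i<h. Q (mat_row N R i)}"
    using l unfolding Q_def D_def[symmetric] l_def[symmetric] by (auto simp: sup_norm_le_iff row_small)
  have "real (card {r \<in> sign_vectors N. Q r}) \<le> 12 * pi\<^sup>2 / (\<rho>\<^sup>2 * l\<^sup>2) * 2 ^ N"
    unfolding Q_def using \<rho> l by (intro card_sign_vectors_Bases_small_le[OF B]) (auto simp: D_def)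
  then have "real (card {r \<in> sign_vectors N. Q r}) / 2 ^ N \<le> 12 * pi\<^sup>2 / (\<rho>\<^sup>2 * D)"
    using l by (simp add: field_simps)
  also have "\<dots> \<le> 200 / (\<rho> ^ 4 * D)"
  proof -
    have "pi\<^sup>2 \<le> 4\<^sup>2"
      using pi_less_4 pi_gt_zero by (intro power_mono) auto
    moreover have "\<rho> ^ 4 \<le> \<rho>\<^sup>2"
      using \<rho> by (intro power_decreasing) auto
    ultimately have "12 * pi\<^sup>2 * (\<rho> ^ 4 * D) \<le> 200 * (\<rho>\<^sup>2 * D)"
      using \<rho> D by (intro mult_mono) auto
    then show ?thesis
      using \<rho> D by (simp add: field_simps)
  qed
  finally have "(real (card {r \<in> sign_vectors N. Q r}) / 2 ^ N) ^ h \<le> (200 / (\<rho> ^ 4 * D)) ^ h"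
    by (intro power_mono) auto
  also have "\<dots> = 200 ^ h * (\<rho> ^ 4 * D) powr (- real h)"
    using \<rho> D by (simp add: powr_minus powr_realpow power_divide divide_inverse power_mult_distrib power_inverse)
  finally show ?thesis
    unfolding event prob_rademacher_rows by (simp add: D_def mult.assoc)
qed

theorem corollary5p3:
  shows "\<exists>C1::real. C1 > 1 \<and>
    (\<forall>\<rho> \<delta>::real. 0 < \<rho> \<and> \<rho> < 1 \<and> 0 < \<delta> \<and> \<delta> < 1 \<longrightarrow>
      (\<exists>d0::nat. \<forall>d h N::nat. d \<ge> d0 \<longrightarrow>
        (\<forall>(u1, u2) \<in> Bases N (2 * d) \<rho> \<delta>.
          measure_pmf.prob (rademacher_matrix h N)
            {R. sup_norm h (mat_vec N R u1) \<le> 1 / sqrt (\<delta> * real d) \<and>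
                sup_norm h (mat_vec N R u2) \<le> 1 / sqrt (\<delta> * real d)}
          \<le> C1 ^ h * (\<rho> ^ 4 * \<delta> * real d) powr (- real h))))"
  by (intro exI[of _ "200::real"] conjI allI impI exI[of _ "1::nat"])
     (auto intro!: prob_small_pair_le)

end
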